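(* There exists a sequence $f_0, f_1, \ldots \in \{0,1\}$ such that for every integer $n = \langle d_0, \ldots, d_s \rangle_2 \geq 2$: (i) if $d_0 = f_0, \ldots, d_s = f_s$, then $\nu_2(H(n,2)) \geq 1 - s$; (ii) if $d_0 = f_0, \ldots, d_{r-1} = f_{r-1}$ and $d_r \neq f_r$ for some positive integer $r \leq s$, then $\nu_2(H(n,2)) = r - 2s$. Precisely, the sequence is determined recursively by $f_0 = 1$ and, for every positive integer $s$, $f_s = 1$ if $\nu_2(H(\langle f_0, \ldots, f_{s-1}, 1 \rangle_2, 2)) \geq 1 - s$, and $f_s = 0$ otherwise. In particular, $f_0 = 1$, $f_1 = 1$, $f_2 = 0$.
   Context: For integers $n \geq k \geq 1$, $H(n,k) := \sum_{1 \leq i_1 < \cdots < i_k \leq n} \frac{1}{i_1 \cdots i_k}$. $\nu_2$ denotes the $2$-adic valuation on the rationals. The notation $\langle a_0, \ldots, a_v \rangle_2 := \sum_{i=0}^v a_i 2^{v-i}$ denotes a binary representation, with $a_i \in \{0,1\}$ and $a_0 = 1$. *)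

theory Defs
  imports Main "HOL-Computational_Algebra.Computational_Algebra"
begin

definition H :: "nat \<Rightarrow> nat \<Rightarrow> rat" where
  "H n k = (\<Sum>S\<in>{S. S \<subseteq> {1..n} \<and> card S = k}. 1 / (\<Prod>i\<in>S. of_nat i))"

definition nu2 :: "rat \<Rightarrow> int" where
  "nu2 q = int (multiplicity (2::int) (fst (quotient_of q)))
         - int (multiplicity (2::int) (snd (quotient_of q)))"

definition bin_val :: "(nat \<Rightarrow> nat) \<Rightarrow> nat \<Rightarrow> nat" where
  "bin_val a v = (\<Sum>i\<le>v. a i * 2 ^ (v - i))"

end

theory Submission
  imports Defs
begin

text \<open>
  Write F_s = <f_0, ..., f_s>_2 and work in the ring of rationals with odd denominator.
  Two facts drive the argument. First, if n < 2^(s+1) and t <= s, then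
  4^s H(n,2) = 4^t H(n div 2^(s-t), 2)  (mod 2^(t+1)):
  the terms 4^s/(i j) with 2^(s-t) dividing both i and j reproduce the right-hand side, and all
  other terms are divisible by 2^(t+1). Second, for 2^(s-1) <= m < 2^s the difference
  4^s H(2m+1,2) - 4^s H(2m,2) = 4^s H_(2m)/(2m+1) has valuation exactly s, since 2^s H_N is a
  2-adic unit for 2^s <= N < 2^(s+1).

  By induction on s, 2^(s+1) divides 4^s H(F_s,2): by the first fact both candidates
  4^s H(2 F_(s-1) + d, 2), d in {0,1}, are divisible by 2^s; by the second exactly one of them
  is divisible by 2^(s+1), and the condition defining f_s selects that one, the other having
  valuation exactly s. A number n that first deviates from f at digit r is, by the first fact
  with t = r, congruent modulo 2^(r+1) to the other candidate of level r, so
  nu_2(4^s H(n,2)) = r.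
\<close>

section \<open>Rationals with odd denominator\<close>

definition two_integral :: "rat \<Rightarrow> bool" where
  "two_integral q \<longleftrightarrow> (\<exists>a b::int. odd b \<and> q = of_int a / of_int b)"

definition two_unit :: "rat \<Rightarrow> bool" where
  "two_unit q \<longleftrightarrow> (\<exists>a b::int. odd a \<and> odd b \<and> q = of_int a / of_int b)"

lemma two_integral_add:
  assumes "two_integral p" "two_integral q"
  shows "two_integral (p + q)"
proof -
  obtain a b c d where "odd b" "p = of_int a / of_int b" "odd d" "q = of_int c / of_int d"
    using assms unfolding two_integral_def by blast
  moreover have "b \<noteq> 0" "d \<noteq> 0" using \<open>odd b\<close> \<open>odd d\<close> by auto
  ultimately show ?thesis unfolding two_integral_def
    by (intro exI[of _ "a * d + c * b"] exI[of _ "b * d"]) (simp add: field_simps)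
qed

lemma two_integral_mult:
  assumes "two_integral p" "two_integral q"
  shows "two_integral (p * q)"
proof -
  obtain a b c d where "odd b" "p = of_int a / of_int b" "odd d" "q = of_int c / of_int d"
    using assms unfolding two_integral_def by blast
  then show ?thesis unfolding two_integral_def
    by (intro exI[of _ "a * c"] exI[of _ "b * d"]) simp
qed

lemma two_integral_0 [simp]: "two_integral 0"
  unfolding two_integral_def by (intro exI[of _ 0] exI[of _ 1]) simp

lemma two_integral_sum: "(\<And>x. x \<in> A \<Longrightarrow> two_integral (f x)) \<Longrightarrow> two_integral (sum f A)"
  by (induction A rule: infinite_finite_induct) (auto intro: two_integral_add)

lemma two_unit_imp_two_integral: "two_unit q \<Longrightarrow> two_integral q"
  unfolding two_unit_def two_integral_def by blast

lemma two_unit_uminus: "two_unit q \<Longrightarrow> two_unit (- q)"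
  unfolding two_unit_def by (metis even_minus minus_divide_left of_int_minus)

lemma two_unit_divide:
  assumes "two_unit p" "two_unit q"
  shows "two_unit (p / q)"
proof -
  obtain a b c d where "odd a" "odd b" "p = of_int a / of_int b"
    "odd c" "odd d" "q = of_int c / of_int d"
    using assms unfolding two_unit_def by blast
  then show ?thesis unfolding two_unit_def
    by (intro exI[of _ "a * d"] exI[of _ "b * c"]) simp
qed

lemma two_unit_of_nat: "odd n \<Longrightarrow> two_unit (of_nat n)"
  unfolding two_unit_def by (intro exI[of _ "int n"] exI[of _ 1]) simp

lemma two_integral_cases:
  assumes "two_integral q"
  shows "two_unit q \<or> two_integral (q / 2)"
proof -
  obtain a b where b: "odd b" and q: "q = of_int a / of_int b"
    using assms unfolding two_integral_def by blast
  show ?thesis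
  proof (cases "even a")
    case True
    then obtain c where "a = 2 * c" ..
    then have "q / 2 = of_int c / of_int b" unfolding q by simp
    then show ?thesis using b unfolding two_integral_def by blast
  next
    case False
    then show ?thesis using b q unfolding two_unit_def by blast
  qed
qed

lemma two_unit_add_double:
  assumes "two_unit u" "two_integral z"
  shows "two_unit (u + 2 * z)"
proof -
  obtain a b c d where odd: "odd a" "odd b" "odd d"
    and u: "u = of_int a / of_int b" and z: "z = of_int c / of_int d"
    using assms unfolding two_integral_def two_unit_def by blast
  have "b \<noteq> 0" "d \<noteq> 0" using odd by auto
  then have "u + 2 * z = of_int (a * d + 2 * c * b) / of_int (b * d)"
    unfolding u z by (simp add: field_simps)
  then show ?thesis unfolding two_unit_def using odd
    by (intro exI[of _ "a * d + 2 * c * b"] exI[of _ "b * d"]) simp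
qed

lemma two_unit_add_two_unit:
  assumes "two_unit u" "two_unit v"
  shows "two_integral ((u + v) / 2)"
proof -
  obtain a b c d where odd: "odd a" "odd b" "odd c" "odd d"
    and u: "u = of_int a / of_int b" and v: "v = of_int c / of_int d"
    using assms unfolding two_unit_def by blast
  then have "even (a * d + c * b)" by simp
  then obtain e where e: "a * d + c * b = 2 * e" ..
  have "b \<noteq> 0" "d \<noteq> 0" using odd by auto
  then have "(u + v) / 2 = of_int (a * d + c * b) / of_int (2 * (b * d))"
    unfolding u v by (simp add: field_simps)
  also have "\<dots> = of_int e / of_int (b * d)" unfolding e by simp
  finally show ?thesis unfolding two_integral_def using odd
    by (intro exI[of _ e] exI[of _ "b * d"]) simp
qed

lemma two_unit_add_cases:
  assumes "two_integral z" "two_unit u"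
  obtains "two_unit (z + u)" "two_integral (z / 2)"
    | "two_integral ((z + u) / 2)" "two_unit z"
proof -
  have "two_unit (z + u) \<or> two_integral ((z + u) / 2)"
    using two_integral_cases two_integral_add[OF assms(1) two_unit_imp_two_integral[OF assms(2)]]
    by blast
  then show ?thesis
  proof
    assume zu: "two_unit (z + u)"
    then have "two_integral ((z + u + - u) / 2)"
      using two_unit_add_two_unit two_unit_uminus assms(2) by blast
    then have "two_integral (z / 2)" by simp
    with zu show ?thesis by (rule that(1))
  next
    assume zu: "two_integral ((z + u) / 2)"
    then have "two_unit (- u + 2 * ((z + u) / 2))"
      using two_unit_add_double two_unit_uminus assms(2) by blast
    moreover have "- u + 2 * ((z + u) / 2) = z" by (simp add: field_simps)
    ultimately have "two_unit z" by simp
    with zu show ?thesis by (rule that(2))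
  qed
qed

lemma two_integral_pow_divide:
  assumes "0 < i" "\<not> 2 ^ Suc m dvd i"
  shows "two_integral (2 ^ m / of_nat i)"
proof -
  define v where "v = multiplicity 2 i"
  obtain u where u: "i = 2 ^ v * u" "\<not> 2 dvd u"
    using multiplicity_decompose'[of i 2] assms(1) unfolding v_def by auto
  have "v \<le> m"
    using assms(2) u(1) le_imp_power_dvd[of "Suc m" v "2::nat"] by (metis dvd_mult2 not_less_eq_eq)
  then have "(2::rat) ^ m = 2 ^ v * 2 ^ (m - v)"
    by (metis le_add_diff_inverse power_add)
  then have "(2::rat) ^ m / of_nat i = of_int (2 ^ (m - v)) / of_int (int u)"
    unfolding u(1) by simp
  then show ?thesis unfolding two_integral_def using u(2)
    by (intro exI[of _ "2 ^ (m - v)"] exI[of _ "int u"]) auto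
qed

lemma nu2_of_int_divide:
  assumes "x \<noteq> 0" "y \<noteq> 0"
  shows "nu2 (of_int x / of_int y) = int (multiplicity 2 x) - int (multiplicity 2 y)"
proof -
  obtain p d where pd: "quotient_of (of_int x / of_int y) = (p, d)"
    by (cases "quotient_of (of_int x / of_int y)")
  have "d > 0" using quotient_of_denom_pos[OF pd] .
  moreover have "of_int x / of_int y = (of_int p / of_int d :: rat)"
    using quotient_of_div[OF pd] .
  ultimately have e: "p * y = x * d"
    using assms by (simp add: field_simps flip: of_int_mult)
  with assms \<open>d > 0\<close> have "p \<noteq> 0" by auto
  have "multiplicity 2 (p * y) = multiplicity (2::int) (x * d)" using e by simp
  then have "multiplicity (2::int) p + multiplicity 2 y = multiplicity 2 x + multiplicity 2 d"
    using \<open>p \<noteq> 0\<close> assms \<open>d > 0\<close> by (simp add: prime_elem_multiplicity_mult_distrib)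
  then show ?thesis unfolding nu2_def pd by simp
qed

lemma nu2_eq_if_two_unit:
  assumes "two_unit (q * 2 ^ a / 2 ^ b)"
  shows "nu2 q = int b - int a"
proof -
  obtain x y where xy: "odd x" "odd y" "q * 2 ^ a / 2 ^ b = of_int x / of_int y"
    using assms unfolding two_unit_def by blast
  have "q = (q * 2 ^ a / 2 ^ b) * 2 ^ b / 2 ^ a" by simp
  also have "\<dots> = of_int (2 ^ b * x) / of_int (2 ^ a * y)"
    unfolding xy(3) by (simp add: mult.commute)
  finally have "nu2 q = int (multiplicity 2 (2 ^ b * x)) - int (multiplicity 2 (2 ^ a * y))"
    using xy by (simp only:) (intro nu2_of_int_divide; auto)
  moreover have "multiplicity (2::int) (2 ^ k * z) = k" if "odd z" for k z
    using that by (intro multiplicity_decomposeI) auto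
  ultimately show ?thesis using xy by simp
qed

lemma nu2_ge_if_two_integral:
  assumes "two_integral (q * 2 ^ a / 2 ^ b)" "b \<le> a"
  shows "int b - int a \<le> nu2 q"
proof (cases "q = 0")
  case True
  then show ?thesis using assms(2) by (simp add: nu2_def)
next
  case False
  obtain x y where xy: "odd y" "q * 2 ^ a / 2 ^ b = of_int x / of_int y"
    using assms unfolding two_integral_def by blast
  with False have "x \<noteq> 0" by auto
  define m where "m = multiplicity 2 x"
  obtain z where z: "x = 2 ^ m * z" "\<not> 2 dvd z"
    using multiplicity_decompose'[of x 2] \<open>x \<noteq> 0\<close> unfolding m_def by auto
  have "q * 2 ^ a / 2 ^ (b + m) = of_int z / of_int y"
    using xy z(1) by (simp add: field_simps power_add)
  then have "two_unit (q * 2 ^ a / 2 ^ (b + m))"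
    unfolding two_unit_def using z xy by blast
  from nu2_eq_if_two_unit[OF this] show ?thesis by simp
qed

section \<open>The sums H(n,2) and harmonic numbers\<close>

definition lt_pairs :: "nat \<Rightarrow> (nat \<times> nat) set" where
  "lt_pairs n = (SIGMA j:{1..n}. {1..<j})"

definition harmonic :: "nat \<Rightarrow> rat" where
  "harmonic n = (\<Sum>i = 1..n. 1 / of_nat i)"

lemma finite_lt_pairs [simp]: "finite (lt_pairs n)"
  unfolding lt_pairs_def by simp

lemma H2_eq_sum_lt_pairs: "H n 2 = (\<Sum>(j, i)\<in>lt_pairs n. 1 / (of_nat i * of_nat j))"
proof -
  let ?set = "\<lambda>(j::nat, i::nat). {i, j}"
  have img: "{S. S \<subseteq> {1..n} \<and> card S = 2} = ?set ` lt_pairs n"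
  proof (intro set_eqI iffI)
    fix S assume "S \<in> {S. S \<subseteq> {1..n} \<and> card S = 2}"
    then obtain x y where S: "S = {x, y}" "x \<noteq> y" "x \<in> {1..n}" "y \<in> {1..n}"
      by (auto simp: card_2_iff)
    show "S \<in> ?set ` lt_pairs n"
    proof (cases "x < y")
      case True
      then show ?thesis using S unfolding lt_pairs_def by (intro image_eqI[of _ _ "(y, x)"]) auto
    next
      case False
      then show ?thesis using S unfolding lt_pairs_def by (intro image_eqI[of _ _ "(x, y)"]) auto
    qed
  qed (auto simp: lt_pairs_def)
  have "inj_on ?set (lt_pairs n)"
    by (rule inj_onI) (auto simp: lt_pairs_def doubleton_eq_iff)
  then have "H n 2 = (\<Sum>p\<in>lt_pairs n. 1 / (\<Prod>i\<in>?set p. of_nat i))"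
    unfolding H_def img by (simp add: sum.reindex)
  also have "\<dots> = (\<Sum>(j, i)\<in>lt_pairs n. 1 / (of_nat i * of_nat j))"
    by (rule sum.cong) (auto simp: lt_pairs_def)
  finally show ?thesis .
qed

lemma H2_Suc: "H (Suc n) 2 = H n 2 + harmonic n / of_nat (Suc n)"
proof -
  have nested: "H m 2 = (\<Sum>j = 1..m. \<Sum>i = 1..<j. 1 / (of_nat i * of_nat j))" for m
    unfolding H2_eq_sum_lt_pairs lt_pairs_def by (simp add: sum.Sigma)
  have "(\<Sum>i = 1..<Suc n. 1 / (of_nat i * of_nat (Suc n) :: rat)) = harmonic n / of_nat (Suc n)"
    unfolding harmonic_def sum_divide_distrib atLeastLessThanSuc_atLeastAtMost by simp
  then show ?thesis unfolding nested by simp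
qed

lemma H2_0: "H 0 2 = 0"
  unfolding H2_eq_sum_lt_pairs lt_pairs_def by simp

lemma harmonic_0: "harmonic 0 = 0"
  unfolding harmonic_def by simp

lemma harmonic_Suc: "harmonic (Suc n) = harmonic n + 1 / of_nat (Suc n)"
  unfolding harmonic_def by simp

lemma pow2_dvd_imp_eq:
  assumes "2 ^ s dvd i" "0 < i" "i < 2 ^ Suc s"
  shows "i = (2::nat) ^ s"
proof -
  obtain c where c: "i = 2 ^ s * c" using assms(1) ..
  with assms(2,3) have "0 < c" "c < 2" by auto
  then show ?thesis using c by simp
qed

text \<open>1/2^s is the only summand of harmonic N with valuation -s.\<close>
lemma two_unit_harmonic:
  assumes "2 ^ s \<le> N" "N < 2 ^ Suc s"
  shows "two_unit (2 ^ s * harmonic N)"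
proof -
  have mem: "2 ^ s \<in> {1..N}" using assms by simp
  have "2 ^ s * harmonic N = (\<Sum>i = 1..N. 2 ^ s / of_nat i)"
    unfolding harmonic_def sum_distrib_left by simp
  also have "\<dots> = 1 + (\<Sum>i\<in>{1..N} - {2 ^ s}. 2 ^ s / of_nat i)"
    using sum.remove[OF finite_atLeastAtMost mem, of "\<lambda>i. (2::rat) ^ s / of_nat i"] by simp
  also have "(\<Sum>i\<in>{1..N} - {2 ^ s}. (2::rat) ^ s / of_nat i)
      = 2 * (\<Sum>i\<in>{1..N} - {2 ^ s}. 2 ^ s / (2 * of_nat i))"
    unfolding sum_distrib_left by (rule sum.cong) auto
  finally have eq: "2 ^ s * harmonic N = 1 + 2 * (\<Sum>i\<in>{1..N} - {2 ^ s}. 2 ^ s / (2 * of_nat i))" .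
  have "two_integral (\<Sum>i\<in>{1..N} - {2 ^ s}. 2 ^ s / (2 * of_nat i))"
  proof (rule two_integral_sum)
    fix i assume i: "i \<in> {1..N} - {2 ^ s}"
    then have "\<not> 2 ^ s dvd i" using pow2_dvd_imp_eq[of s i] assms(2) by auto
    then obtain s' where s': "s = Suc s'" by (cases s) auto
    then have "two_integral (2 ^ s' / of_nat i)"
      using two_integral_pow_divide[of i s'] i \<open>\<not> 2 ^ s dvd i\<close> by simp
    then show "two_integral (2 ^ s / (2 * of_nat i))" unfolding s' by simp
  qed
  then show ?thesis
    unfolding eq using two_unit_add_double[of 1] two_unit_of_nat[of 1] by simp
qed

lemma four_pow_eq: "(4::rat) ^ n = 2 ^ n * 2 ^ n"
  by (simp flip: power_mult_distrib)

lemma two_unit_H2_Suc_diff: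
  assumes "2 ^ s \<le> N" "N < 2 ^ Suc s" "even N"
  shows "two_unit ((4 ^ s * H (Suc N) 2 - 4 ^ s * H N 2) / 2 ^ s)"
proof -
  have "4 ^ s * H (Suc N) 2 - 4 ^ s * H N 2 = 2 ^ s * (2 ^ s * harmonic N / of_nat (Suc N))"
    unfolding H2_Suc four_pow_eq by (simp add: algebra_simps)
  then have "(4 ^ s * H (Suc N) 2 - 4 ^ s * H N 2) / 2 ^ s = 2 ^ s * harmonic N / of_nat (Suc N)"
    by simp
  then show ?thesis
    using two_unit_divide[OF two_unit_harmonic[OF assms(1,2)] two_unit_of_nat[of "Suc N"]] assms(3)
    by simp
qed

lemma lt_pairs_dvd_eq_image:
  assumes "0 < c"
  shows "{p \<in> lt_pairs n. c dvd fst p \<and> c dvd snd p}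
    = (\<lambda>(b, a). (c * b, c * a)) ` lt_pairs (n div c)"
proof (intro set_eqI iffI)
  fix p assume "p \<in> {p \<in> lt_pairs n. c dvd fst p \<and> c dvd snd p}"
  then obtain b a where p: "p = (c * b, c * a)" "1 \<le> c * a" "a < b" "c * b \<le> n"
    unfolding lt_pairs_def using assms by (auto elim!: dvdE)
  then have "(b, a) \<in> lt_pairs (n div c)"
    unfolding lt_pairs_def using assms
    by (auto simp: less_eq_div_iff_mult_less_eq mult.commute intro: Suc_leI)
  then show "p \<in> (\<lambda>(b, a). (c * b, c * a)) ` lt_pairs (n div c)"
    unfolding p(1) by force
next
  fix p assume "p \<in> (\<lambda>(b, a). (c * b, c * a)) ` lt_pairs (n div c)"
  then show "p \<in> {p \<in> lt_pairs n. c dvd fst p \<and> c dvd snd p}"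
    unfolding lt_pairs_def using assms
    by (auto simp: less_eq_div_iff_mult_less_eq mult.commute)
qed

lemma scale_four_pow: "4 ^ s * q / 2 ^ k = q * 2 ^ (2 * s) / 2 ^ k" for q :: rat
  by (simp add: power_mult)

lemma two_integral_pair_term:
  assumes "0 < i" "0 < j" "j < 2 ^ Suc s" "t \<le> s" "\<not> 2 ^ (s - t) dvd i"
  shows "two_integral (4 ^ s / (of_nat i * of_nat j) / 2 ^ Suc t)"
proof -
  obtain k where k: "s - t = Suc k"
    using assms(5) by (cases "s - t") auto
  have "two_integral (2 ^ k / of_nat i)"
    using two_integral_pow_divide[of i k] assms(1,5) k by simp
  moreover have "\<not> 2 ^ Suc s dvd j" using assms(2,3) by (auto dest: dvd_imp_le)
  then have "two_integral (2 ^ s / of_nat j)"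
    using two_integral_pow_divide[of j s] assms(2) by simp
  moreover have "Suc t + k = s" using k assms(4) by simp
  then have "(4::rat) ^ s = 2 ^ Suc t * 2 ^ k * 2 ^ s"
    unfolding four_pow_eq by (simp only: flip: power_add)
  ultimately show ?thesis using two_integral_mult by fastforce
qed

lemma H2_prefix_cong:
  assumes "n < 2 ^ Suc s" "t \<le> s"
  shows "two_integral ((4 ^ s * H n 2 - 4 ^ t * H (n div 2 ^ (s - t)) 2) / 2 ^ Suc t)"
proof -
  define c where "c = (2::nat) ^ (s - t)"
  define summand where "summand = (\<lambda>s (j, i). (4::rat) ^ s / (of_nat i * of_nat j))"
  define D where "D = {p \<in> lt_pairs n. c dvd fst p \<and> c dvd snd p}"
  have scaled_H2: "4 ^ s * H m 2 = sum (summand s) (lt_pairs m)" for s m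
    unfolding H2_eq_sum_lt_pairs sum_distrib_left summand_def by (simp add: case_prod_beta)
  have c_sq: "4 ^ s = 4 ^ t * (of_nat c * of_nat c :: rat)"
    using assms(2) unfolding c_def four_pow_eq by (simp flip: power_add)
  moreover have "0 < c" unfolding c_def by simp
  ultimately have "sum (summand s) D = sum (summand t) (lt_pairs (n div c))"
    unfolding D_def lt_pairs_dvd_eq_image[OF \<open>0 < c\<close>]
    by (subst sum.reindex) (auto simp: inj_on_def summand_def c_sq intro!: sum.cong)
  moreover have "sum (summand s) (lt_pairs n) = sum (summand s) (lt_pairs n - D) + sum (summand s) D"
    by (rule sum.subset_diff) (auto simp: D_def)
  ultimately have diff: "4 ^ s * H n 2 - 4 ^ t * H (n div c) 2 = sum (summand s) (lt_pairs n - D)"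
    unfolding scaled_H2 by simp
  have "two_integral (sum (summand s) (lt_pairs n - D) / 2 ^ Suc t)"
    unfolding sum_divide_distrib
  proof (rule two_integral_sum)
    fix p assume "p \<in> lt_pairs n - D"
    then obtain j i where p: "p = (j, i)" "0 < i" "i < j" "j \<le> n" "\<not> (c dvd j \<and> c dvd i)"
      unfolding D_def lt_pairs_def by auto
    then have "j < 2 ^ Suc s" "i < 2 ^ Suc s" using assms(1) by auto
    then show "two_integral (summand s p / 2 ^ Suc t)"
      using p assms(2) two_integral_pair_term[of i j s t] two_integral_pair_term[of j i s t]
      unfolding summand_def c_def by (cases "c dvd i") (auto simp: mult.commute c_def)
  qed
  then show ?thesis unfolding diff[unfolded c_def] .
qed

section \<open>Binary expansions\<close>

lemma bin_val_0 [simp]: "bin_val a 0 = a 0"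
  unfolding bin_val_def by simp

lemma bin_val_Suc: "bin_val a (Suc v) = 2 * bin_val a v + a (Suc v)"
proof -
  have "(\<Sum>i\<le>v. a i * 2 ^ (Suc v - i)) = 2 * bin_val a v"
    unfolding bin_val_def sum_distrib_left by (rule sum.cong) (auto simp: Suc_diff_le)
  then show ?thesis unfolding bin_val_def by simp
qed

lemma bin_val_cong: "(\<And>i. i \<le> v \<Longrightarrow> a i = b i) \<Longrightarrow> bin_val a v = bin_val b v"
  unfolding bin_val_def by (rule sum.cong) auto

lemma bin_val_add:
  assumes "\<And>i. i \<le> r + k \<Longrightarrow> a i \<le> 1"
  shows "\<exists>low < 2 ^ k. bin_val a (r + k) = bin_val a r * 2 ^ k + low"
  using assms
proof (induction k)
  case 0
  then show ?case by simp
next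
  case (Suc k)
  then obtain low where low: "low < 2 ^ k" "bin_val a (r + k) = bin_val a r * 2 ^ k + low"
    by force
  have "a (Suc (r + k)) \<le> 1" using Suc.prems by simp
  with low show ?case
    by (intro exI[of _ "2 * low + a (Suc (r + k))"]) (auto simp: bin_val_Suc)
qed

lemma bin_val_div:
  assumes "\<And>i. i \<le> s \<Longrightarrow> a i \<le> 1" "r \<le> s"
  shows "bin_val a s div 2 ^ (s - r) = bin_val a r"
  using bin_val_add[of r "s - r" a] assms by auto

lemma bin_val_bounds:
  assumes "\<And>i. i \<le> s \<Longrightarrow> a i \<le> 1" "a 0 = 1"
  shows "2 ^ s \<le> bin_val a s" "bin_val a s < 2 ^ Suc s"
  using bin_val_add[of 0 s a] assms by auto

section \<open>The sequence f\<close>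

text \<open>f_prefix s is <f_0, ..., f_s>_2. Since <f_0, ..., f_s, 1>_2 = 2 f_prefix s + 1, the
  recursion is the one defining f_(s+1).\<close>
fun f_prefix :: "nat \<Rightarrow> nat" where
  "f_prefix 0 = 1"
| "f_prefix (Suc s) =
    2 * f_prefix s + (if - int s \<le> nu2 (H (2 * f_prefix s + 1) 2) then 1 else 0)"

definition f_digit :: "nat \<Rightarrow> nat" where
  "f_digit s = f_prefix s mod 2"

lemma f_digit_0: "f_digit 0 = 1"
  unfolding f_digit_def by simp

lemma f_digit_Suc: "f_digit (Suc s) = (if - int s \<le> nu2 (H (2 * f_prefix s + 1) 2) then 1 else 0)"
  unfolding f_digit_def by simp

lemma f_digit_le_1: "f_digit s \<le> 1"
  unfolding f_digit_def by simp

lemma f_prefix_Suc: "f_prefix (Suc s) = 2 * f_prefix s + f_digit (Suc s)"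
  by (simp add: f_digit_Suc)

lemma bin_val_f_digit: "bin_val f_digit s = f_prefix s"
  by (induction s) (simp_all add: bin_val_Suc f_digit_0 f_prefix_Suc del: f_prefix.simps(2))

lemma f_prefix_bounds: "2 ^ s \<le> f_prefix s" "f_prefix s < 2 ^ Suc s"
  using bin_val_bounds[of s f_digit] f_digit_le_1 f_digit_0 by (simp_all add: bin_val_f_digit)

lemma f_prefix_step:
  assumes IH: "two_integral (4 ^ t * H (f_prefix t) 2 / 2 ^ Suc t)"
  defines "T \<equiv> Suc t"
  shows "two_integral (4 ^ T * H (f_prefix T) 2 / 2 ^ Suc T)"
    and "two_unit (4 ^ T * H (2 * f_prefix t + (1 - f_digit T)) 2 / 2 ^ T)"
proof -
  define F where "F = f_prefix t"
  define z where "z = 4 ^ T * H (2 * F) 2 / 2 ^ T"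
  define z' where "z' = 4 ^ T * H (2 * F + 1) 2 / 2 ^ T"
  have F: "2 ^ t \<le> F" "F < 2 ^ T"
    using f_prefix_bounds[of t] unfolding F_def T_def by auto
  have "two_integral ((4 ^ T * H (2 * F) 2 - 4 ^ t * H F 2) / 2 ^ T)"
    using H2_prefix_cong[of "2 * F" T t] F unfolding T_def by simp
  moreover have "two_integral (4 ^ t * H F 2 / 2 ^ T)"
    using IH unfolding F_def T_def .
  ultimately have z: "two_integral z"
    unfolding z_def using two_integral_add by (fastforce simp: diff_divide_distrib)
  have u: "two_unit (z' - z)"
    using two_unit_H2_Suc_diff[of T "2 * F"] F unfolding z_def z'_def T_def
    by (simp add: diff_divide_distrib)
  have digit: "f_digit T = (if - int t \<le> nu2 (H (2 * F + 1) 2) then 1 else 0)"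
    unfolding T_def f_digit_Suc F_def ..
  from z u have "two_integral (4 ^ T * H (f_prefix T) 2 / 2 ^ Suc T)
    \<and> two_unit (4 ^ T * H (2 * f_prefix t + (1 - f_digit T)) 2 / 2 ^ T)"
  proof (cases rule: two_unit_add_cases)
    case 1
    then have "nu2 (H (2 * F + 1) 2) = int T - int (2 * T)"
      using nu2_eq_if_two_unit unfolding z'_def scale_four_pow by simp
    then have "f_digit T = 0" using digit by (simp add: T_def)
    then have "f_prefix T = 2 * F" and "2 * f_prefix t + (1 - f_digit T) = 2 * F + 1"
      using f_prefix_Suc[of t] unfolding T_def F_def by simp_all
    with 1 show ?thesis by (simp add: z_def z'_def mult_ac)
  next
    case 2
    then have "two_integral (H (2 * F + 1) 2 * 2 ^ (2 * T) / 2 ^ Suc T)"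
      unfolding z'_def scale_four_pow[symmetric] by (simp add: mult_ac)
    then have "int (Suc T) - int (2 * T) \<le> nu2 (H (2 * F + 1) 2)"
      by (rule nu2_ge_if_two_integral) (simp add: T_def)
    then have "f_digit T = 1" using digit by (simp add: T_def)
    then have "f_prefix T = 2 * F + 1" and "2 * f_prefix t + (1 - f_digit T) = 2 * F"
      using f_prefix_Suc[of t] unfolding T_def F_def by simp_all
    with 2 show ?thesis by (simp add: z_def z'_def mult_ac)
  qed
  then show "two_integral (4 ^ T * H (f_prefix T) 2 / 2 ^ Suc T)"
    and "two_unit (4 ^ T * H (2 * f_prefix t + (1 - f_digit T)) 2 / 2 ^ T)"
    by blast+
qed

lemma two_integral_f_prefix: "two_integral (4 ^ t * H (f_prefix t) 2 / 2 ^ Suc t)"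
proof (induction t)
  case 0
  have "H 1 2 = 0" using H2_Suc[of 0] by (simp add: H2_0 harmonic_0)
  then show ?case by simp
next
  case (Suc t)
  then show ?case by (rule f_prefix_step(1))
qed

lemma two_unit_f_prefix_flipped:
  "two_unit (4 ^ Suc t * H (2 * f_prefix t + (1 - f_digit (Suc t))) 2 / 2 ^ Suc t)"
  using f_prefix_step(2)[OF two_integral_f_prefix] .

lemma nu2_H2_f_prefix:
  assumes "1 \<le> s"
  shows "1 - int s \<le> nu2 (H (f_prefix s) 2)"
proof -
  have "two_integral (H (f_prefix s) 2 * 2 ^ (2 * s) / 2 ^ Suc s)"
    using two_integral_f_prefix[of s] unfolding scale_four_pow .
  then have "int (Suc s) - int (2 * s) \<le> nu2 (H (f_prefix s) 2)"
    by (rule nu2_ge_if_two_integral) (use assms in simp)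
  then show ?thesis by simp
qed

lemma nu2_H2_flipped_prefix:
  assumes "n < 2 ^ Suc s" "Suc r \<le> s"
    and "n div 2 ^ (s - Suc r) = 2 * f_prefix r + (1 - f_digit (Suc r))"
  shows "nu2 (H n 2) = int (Suc r) - 2 * int s"
proof -
  define R where "R = Suc r"
  define m where "m = n div 2 ^ (s - R)"
  have "two_unit (4 ^ R * H m 2 / 2 ^ R)"
    using two_unit_f_prefix_flipped[of r] assms(3) unfolding m_def R_def by simp
  moreover have "two_integral ((4 ^ s * H n 2 - 4 ^ R * H m 2) / 2 ^ Suc R)"
    using H2_prefix_cong[of n s R] assms(1,2) unfolding m_def R_def by simp
  ultimately have "two_unit (4 ^ R * H m 2 / 2 ^ R + 2 * ((4 ^ s * H n 2 - 4 ^ R * H m 2) / 2 ^ Suc R))"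
    by (rule two_unit_add_double)
  moreover have "4 ^ R * H m 2 / 2 ^ R + 2 * ((4 ^ s * H n 2 - 4 ^ R * H m 2) / 2 ^ Suc R)
      = 4 ^ s * H n 2 / 2 ^ R"
    by (simp add: field_simps)
  ultimately have "two_unit (H n 2 * 2 ^ (2 * s) / 2 ^ R)"
    unfolding scale_four_pow by simp
  from nu2_eq_if_two_unit[OF this] show ?thesis
    unfolding R_def by simp
qed

lemma H2_3: "H 3 2 = 1"
  by (simp add: numeral_eq_Suc H2_Suc[unfolded numeral_2_eq_2] H2_0[unfolded numeral_2_eq_2]
      harmonic_Suc harmonic_0)

lemma H2_7: "H 7 2 = 469 / 180"
  by (simp add: numeral_eq_Suc H2_Suc[unfolded numeral_2_eq_2] H2_0[unfolded numeral_2_eq_2]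
      harmonic_Suc harmonic_0)

lemma f_digit_1: "f_digit 1 = 1"
proof -
  have "nu2 1 = 0" using nu2_eq_if_two_unit[of 1 0 0] two_unit_of_nat[of 1] by simp
  then show ?thesis using f_digit_Suc[of 0] by (simp add: H2_3)
qed

lemma f_digit_2: "f_digit 2 = 0"
proof -
  have "two_unit ((469 / 180 :: rat) * 2 ^ 2 / 2 ^ 0)"
    unfolding two_unit_def by (intro exI[of _ 469] exI[of _ 45]) simp
  then have "nu2 (469 / 180) = -2" using nu2_eq_if_two_unit by fastforce
  moreover have "f_prefix 1 = 3" using f_prefix_Suc[of 0] f_digit_1 by simp
  ultimately show ?thesis using f_digit_Suc[of 1, unfolded Suc_1] by (simp add: H2_7)
qed

lemma f_digit_recursion:
  assumes "0 < s"
  shows "f_digit s = (if 1 - int s \<le> nu2 (H (bin_val (f_digit(s := 1)) s) 2) then 1 else 0)"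
proof -
  obtain r where s: "s = Suc r" using assms by (cases s) auto
  have "bin_val (f_digit(s := 1)) r = bin_val f_digit r"
    by (rule bin_val_cong) (simp add: s)
  then have "bin_val (f_digit(s := 1)) s = 2 * f_prefix r + 1"
    unfolding s bin_val_Suc by (simp add: bin_val_f_digit)
  then show ?thesis unfolding s f_digit_Suc by simp
qed

lemma nu2_H2_agreeing:
  assumes "\<forall>i\<le>s. d i = f_digit i" "2 \<le> bin_val d s"
  shows "1 - int s \<le> nu2 (H (bin_val d s) 2)"
proof -
  have "bin_val d s = f_prefix s"
    using assms(1) bin_val_cong[of s d f_digit] by (simp add: bin_val_f_digit)
  moreover have "0 < s" using assms f_digit_0 by (cases s) auto
  ultimately show ?thesis using nu2_H2_f_prefix[of s] by simp
qed

lemma nu2_H2_deviating: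
  assumes "\<forall>i\<le>s. d i \<le> 1" "d 0 = 1" "0 < r" "r \<le> s"
    and "\<forall>i<r. d i = f_digit i" "d r \<noteq> f_digit r"
  shows "nu2 (H (bin_val d s) 2) = int r - 2 * int s"
proof -
  obtain r' where r: "r = Suc r'" using assms(3) by (cases r) auto
  have "bin_val d r' = f_prefix r'"
    using assms(5) bin_val_cong[of r' d f_digit] r by (simp add: bin_val_f_digit)
  moreover have "d r = 1 - f_digit r"
    using assms(1,4,6) f_digit_le_1[of r] by fastforce
  ultimately have "bin_val d s div 2 ^ (s - r) = 2 * f_prefix r' + (1 - f_digit (Suc r'))"
    using bin_val_div[of s d r] assms(1,4) r by (simp add: bin_val_Suc)
  moreover have "bin_val d s < 2 ^ Suc s"
    using bin_val_bounds(2)[of s d] assms(1,2) by simp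
  ultimately show ?thesis
    using nu2_H2_flipped_prefix[of "bin_val d s" s r'] assms(4) r by simp
qed

theorem corollary2p1:
  shows "\<exists>f :: nat \<Rightarrow> nat.
    (\<forall>i. f i \<in> {0, 1}) \<and>
    f 0 = 1 \<and>
    (\<forall>s>0. f s = (if nu2 (H (bin_val (f(s := 1)) s) 2) \<ge> 1 - int s then 1 else 0)) \<and>
    f 1 = 1 \<and> f 2 = 0 \<and>
    (\<forall>(n::nat) (s::nat) (d::nat \<Rightarrow> nat).
       (\<forall>i\<le>s. d i \<in> {0, 1}) \<and> d 0 = 1 \<and> n = bin_val d s \<and> n \<ge> 2 \<longrightarrow>
         ((\<forall>i\<le>s. d i = f i) \<longrightarrow> nu2 (H n 2) \<ge> 1 - int s) \<and>
         (\<forall>r. 0 < r \<and> r \<le> s \<and> (\<forall>i<r. d i = f i) \<and> d r \<noteq> f r \<longrightarrow>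
              nu2 (H n 2) = int r - 2 * int s))"
proof (intro exI[of _ f_digit] conjI allI impI)
  show "f_digit i \<in> {0, 1}" for i
    using f_digit_le_1[of i] by auto
  show "f_digit 0 = 1" "f_digit 1 = 1" "f_digit 2 = 0"
    by (fact f_digit_0 f_digit_1 f_digit_2)+
  show "f_digit s = (if 1 - int s \<le> nu2 (H (bin_val (f_digit(s := 1)) s) 2) then 1 else 0)"
    if "0 < s" for s
    using that by (rule f_digit_recursion)
  show "1 - int s \<le> nu2 (H n 2)"
    if "(\<forall>i\<le>s. d i \<in> {0, 1}) \<and> d 0 = 1 \<and> n = bin_val d s \<and> 2 \<le> n"
      and "\<forall>i\<le>s. d i = f_digit i" for n s d
    using that nu2_H2_agreeing by blast
  show "nu2 (H n 2) = int r - 2 * int s"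
    if "(\<forall>i\<le>s. d i \<in> {0, 1}) \<and> d 0 = 1 \<and> n = bin_val d s \<and> 2 \<le> n"
      and "0 < r \<and> r \<le> s \<and> (\<forall>i<r. d i = f_digit i) \<and> d r \<noteq> f_digit r" for n s d r
  proof -
    have "\<forall>i\<le>s. d i \<le> 1" using that(1) by fastforce
    then show ?thesis using that nu2_H2_deviating[of s d r] by blast
  qed
qed

end
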